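(* Let $\mathsf{\Sigma}\in\mathbb{R}^{N\times N_S}$ and $\mathsf{\Lambda}\in\mathbb{R}^{N\times N_L}$ be the Star-to-RWG and Loop-to-RWG matrices of a triangular surface mesh, and for $1\le n\le N_S$ (resp. $1\le n\le N_L$) let $\mathsf{\Sigma}_n=\mathsf{\Sigma}(\mathsf{\Sigma}^{\mathrm T}\mathsf{\Sigma})^+(\mathsf{\Sigma}^{\mathrm T}\mathsf{\Sigma})_n$ (resp. $\mathsf{\Lambda}_n=\mathsf{\Lambda}(\mathsf{\Lambda}^{\mathrm T}\mathsf{\Lambda})^+(\mathsf{\Lambda}^{\mathrm T}\mathsf{\Lambda})_n$) be the filtered Star (resp. Loop) matrices (see context). Then $$\mathsf{\Sigma}_n(\mathsf{\Sigma}_n^{\mathrm T}\mathsf{\Sigma}_n)^+\mathsf{\Sigma}_n^{\mathrm T}=\mathsf{\Sigma}\big((\mathsf{\Sigma}^{\mathrm T}\mathsf{\Sigma})_n\big)^+\mathsf{\Sigma}^{\mathrm T},\qquad \mathsf{\Lambda}_n(\mathsf{\Lambda}_n^{\mathrm T}\mathsf{\Lambda}_n)^+\mathsf{\Lambda}_n^{\mathrm T}=\mathsf{\Lambda}\big((\mathsf{\Lambda}^{\mathrm T}\mathsf{\Lambda})_n\big)^+\mathsf{\Lambda}^{\mathrm T}.$$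
   Context: Consider a closed triangulated surface with $N$ edges, $N_S$ triangles and $N_L$ vertices. Each edge $m$ is shared by two triangles $c_m^+$, $c_m^-$. $[\mathsf{\Sigma}]_{mn}=1$ if cell $n$ is $c_m^+$, $-1$ if cell $n$ is $c_m^-$, $0$ otherwise. $[\mathsf{\Lambda}]_{mn}=\pm1$ when vertex $n$ is an endpoint of edge $m$ (opposite signs for the two endpoints, fixed by the orientation convention), $0$ otherwise. $^+$ denotes the Moore–Penrose pseudo-inverse. For $\mathsf{X}\in\{\mathsf{\Sigma},\mathsf{\Lambda}\}$ with $N_x$ columns, fix an SVD $\mathsf{X}=\mathsf{U}_X\mathsf{S}_X\mathsf{V}_X^{\mathrm T}$ with $\mathsf{V}_X$ orthogonal $N_x\times N_x$ and singular values $\sigma_{X,1}\ge\dots\ge\sigma_{X,N_x}\ge0$, so $\mathsf{X}^{\mathrm T}\mathsf{X}=\mathsf{V}_X\mathrm{diag}(\sigma_{X,i}^2)\mathsf{V}_X^{\mathrm T}$. For $1\le n\le N_x$, $\mathsf{L}_{X,n}$ is diagonal with $[\mathsf{L}_{X,n}]_{ii}=\sigma_{X,i}$ if $i>N_x-n$ and $0$ otherwise, and $(\mathsf{X}^{\mathrm T}\mathsf{X})_n=\mathsf{V}_X\mathsf{L}_{X,n}^2\mathsf{V}_X^{\mathrm T}$. *)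

theory Defs
  imports "Jordan_Normal_Form.Matrix"
begin

definition pinv :: "real mat \<Rightarrow> real mat" where
  "pinv A = (THE B. B \<in> carrier_mat (dim_col A) (dim_row A) \<and>
              A * B * A = A \<and> B * A * B = B \<and>
              transpose_mat (A * B) = A * B \<and> transpose_mat (B * A) = B * A)"

definition orthogonal_mat :: "nat \<Rightarrow> real mat \<Rightarrow> bool" where
  "orthogonal_mat k Q \<longleftrightarrow> Q \<in> carrier_mat k k \<and>
      transpose_mat Q * Q = 1\<^sub>m k \<and> Q * transpose_mat Q = 1\<^sub>m k"

text \<open>Star-to-RWG matrix: entry (m,n) is 1 if cell n is c_m^+, -1 if cell n is c_m^-, 0 otherwise.\<close>
definition star_matrix :: "nat \<Rightarrow> nat \<Rightarrow> (nat \<Rightarrow> nat) \<Rightarrow> (nat \<Rightarrow> nat) \<Rightarrow> real mat" where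
  "star_matrix N NS cp cm = mat N NS (\<lambda>(m, n).
      if n = cp m then 1 else if n = cm m then -1 else 0)"

text \<open>Loop-to-RWG matrix: edge m has endpoints vp m (sign +1) and vm m (sign -1),
  the assignment being the orientation convention.\<close>
definition loop_matrix :: "nat \<Rightarrow> nat \<Rightarrow> (nat \<Rightarrow> nat) \<Rightarrow> (nat \<Rightarrow> nat) \<Rightarrow> real mat" where
  "loop_matrix N NL vp vm = mat N NL (\<lambda>(m, n).
      if n = vp m then 1 else if n = vm m then -1 else 0)"

definition is_svd :: "real mat \<Rightarrow> real mat \<Rightarrow> real mat \<Rightarrow> (nat \<Rightarrow> real) \<Rightarrow> bool" where
  "is_svd X U V \<sigma> \<longleftrightarrow>
     orthogonal_mat (dim_row X) U \<and> orthogonal_mat (dim_col X) V \<and>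
     (\<forall>i j. i \<le> j \<longrightarrow> j < dim_col X \<longrightarrow> \<sigma> j \<le> \<sigma> i) \<and>
     (\<forall>i < dim_col X. 0 \<le> \<sigma> i) \<and>
     X = U * mat (dim_row X) (dim_col X) (\<lambda>(i, j). if i = j then \<sigma> j else 0) * transpose_mat V \<and>
     transpose_mat X * X = V * mat (dim_col X) (dim_col X) (\<lambda>(i, j). if i = j then (\<sigma> j)^2 else 0)
        * transpose_mat V"

text \<open>L_{X,n}: diagonal, entry i (1-based) is sigma_i iff i > Nx - n; 0-based: i \<ge> Nx - n.\<close>
definition L_mat :: "nat \<Rightarrow> (nat \<Rightarrow> real) \<Rightarrow> nat \<Rightarrow> real mat" where
  "L_mat Nx \<sigma> n = mat Nx Nx (\<lambda>(i, j). if i = j \<and> Nx - n \<le> i then \<sigma> i else 0)"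

definition gram_n :: "real mat \<Rightarrow> (nat \<Rightarrow> real) \<Rightarrow> nat \<Rightarrow> real mat" where
  "gram_n V \<sigma> n = V * (L_mat (dim_row V) \<sigma> n * L_mat (dim_row V) \<sigma> n) * transpose_mat V"

definition filtered :: "real mat \<Rightarrow> real mat \<Rightarrow> (nat \<Rightarrow> real) \<Rightarrow> nat \<Rightarrow> real mat" where
  "filtered X V \<sigma> n = X * pinv (transpose_mat X * X) * gram_n V \<sigma> n"

end

theory Submission
  imports Defs
begin

(* With X = U S V^T, every matrix in the statement is an orthogonal conjugate of a
   rectangular diagonal matrix, and the Moore-Penrose inverse commutes with orthogonal
   conjugation while inverting diagonal entries (with 0 inverted to 0). The filtered matrix
   is X_n = U S_n V^T, where S_n keeps only the n smallest singular values, so both sides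
   equal U P U^T with P the diagonal projection onto the indices whose singular value is
   kept and nonzero. *)

lemma assoc_mult_mat_dim:
  fixes A B C :: "'a::semiring_0 mat"
  assumes "dim_col A = dim_row B" and "dim_col B = dim_row C"
  shows "A * B * C = A * (B * C)"
  using assms by (intro assoc_mult_mat) auto

lemma transpose_mult_dim:
  fixes A B :: "'a::comm_semiring_0 mat"
  assumes "dim_col A = dim_row B"
  shows "transpose_mat (A * B) = transpose_mat B * transpose_mat A"
  using assms by (intro transpose_mult) auto

definition is_pseudo_inverse :: "'a::semiring_0 mat \<Rightarrow> 'a mat \<Rightarrow> bool" where
  "is_pseudo_inverse A B \<longleftrightarrow> B \<in> carrier_mat (dim_col A) (dim_row A) \<and>
     A * B * A = A \<and> B * A * B = B \<and>
     transpose_mat (A * B) = A * B \<and> transpose_mat (B * A) = B * A"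

lemma pseudo_inverse_unique:
  fixes A B C :: "'a::comm_semiring_0 mat"
  assumes B: "is_pseudo_inverse A B" and C: "is_pseudo_inverse A C"
  shows "B = C"
proof -
  have dim: "dim_row B = dim_col A" "dim_col B = dim_row A" "dim_row C = dim_col A" "dim_col C = dim_row A"
    using B C by (auto simp: is_pseudo_inverse_def)
  have ABA: "A * B * A = A" and BAB: "B * A * B = B" and AB: "transpose_mat (A * B) = A * B"
    and BA: "transpose_mat (B * A) = B * A"
    using B by (auto simp: is_pseudo_inverse_def)
  have ACA: "A * C * A = A" and CAC: "C * A * C = C" and AC: "transpose_mat (A * C) = A * C"
    and CA: "transpose_mat (C * A) = C * A"
    using C by (auto simp: is_pseudo_inverse_def)
  have At_AC: "transpose_mat A = transpose_mat A * (A * C)"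
    by (metis ACA AC dim transpose_mult_dim index_mult_mat(2,3))
  have At_BA: "transpose_mat A = B * A * transpose_mat A"
    by (metis ABA BA dim assoc_mult_mat_dim transpose_mult_dim index_mult_mat(2,3))
  have "B = B * transpose_mat (A * B)"
    using BAB AB dim by (simp add: assoc_mult_mat_dim)
  also have "\<dots> = B * transpose_mat (A * B) * (A * C)"
    using At_AC dim by (simp add: transpose_mult_dim assoc_mult_mat_dim)
  also have "\<dots> = B * A * C"
    using BAB AB dim by (simp add: assoc_mult_mat_dim)
  also have "\<dots> = B * A * transpose_mat (C * A) * C"
    using CAC CA dim by (simp add: assoc_mult_mat_dim)
  also have "\<dots> = B * A * transpose_mat A * transpose_mat C * C"
    using dim by (simp add: transpose_mult_dim assoc_mult_mat_dim)
  also have "\<dots> = transpose_mat (C * A) * C"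
    using dim by (simp only: At_BA[symmetric]) (simp add: transpose_mult_dim)
  also have "\<dots> = C"
    using CAC CA by simp
  finally show ?thesis .
qed

lemma pinv_eqI:
  assumes "is_pseudo_inverse A B"
  shows "pinv A = B"
proof -
  have "pinv A = (THE B. is_pseudo_inverse A B)"
    by (simp add: pinv_def is_pseudo_inverse_def)
  also have "\<dots> = B"
    using assms pseudo_inverse_unique by blast
  finally show ?thesis .
qed

definition rect_diag_mat :: "nat \<Rightarrow> nat \<Rightarrow> (nat \<Rightarrow> 'a::zero) \<Rightarrow> 'a mat" where
  "rect_diag_mat r c d = mat r c (\<lambda>(i, j). if i = j then d j else 0)"

lemma dim_rect_diag_mat [simp]:
  "dim_row (rect_diag_mat r c d) = r" "dim_col (rect_diag_mat r c d) = c"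
  by (simp_all add: rect_diag_mat_def)

lemma rect_diag_mat_carrier [simp]: "rect_diag_mat r c d \<in> carrier_mat r c"
  by (simp add: carrier_matI)

lemma index_rect_diag_mat [simp]:
  "i < r \<Longrightarrow> j < c \<Longrightarrow> rect_diag_mat r c d $$ (i, j) = (if i = j then d i else 0)"
  by (simp add: rect_diag_mat_def)

lemma transpose_rect_diag_mat [simp]:
  "transpose_mat (rect_diag_mat r c d) = rect_diag_mat c r d"
  by (rule eq_matI) auto

lemma rect_diag_mat_cong:
  "(\<And>i. i < r \<Longrightarrow> i < c \<Longrightarrow> d i = e i) \<Longrightarrow> rect_diag_mat r c d = rect_diag_mat r c e"
  by (rule eq_matI) auto

lemma rect_diag_mat_mult [simp]:
  fixes d e :: "nat \<Rightarrow> 'a::semiring_0"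
  shows "rect_diag_mat r k d * rect_diag_mat k c e =
    rect_diag_mat r c (\<lambda>i. if i < k then d i * e i else 0)"
proof (rule eq_matI)
  fix i j assume "i < dim_row (rect_diag_mat r c (\<lambda>i. if i < k then d i * e i else 0))"
    and "j < dim_col (rect_diag_mat r c (\<lambda>i. if i < k then d i * e i else 0))"
  then have i: "i < r" and j: "j < c" by simp_all
  have "(rect_diag_mat r k d * rect_diag_mat k c e) $$ (i, j) =
      (\<Sum>l = 0..<k. (if i = l then d i else 0) * (if l = j then e l else 0))"
    using i j by (simp add: scalar_prod_def)
  also have "\<dots> = (\<Sum>l = 0..<k. if l = i then (if i = j then d i * e i else 0) else 0)"
    by (rule sum.cong) auto
  also have "\<dots> = rect_diag_mat r c (\<lambda>i. if i < k then d i * e i else 0) $$ (i, j)"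
    using i j by (simp add: sum.delta)
  finally show "(rect_diag_mat r k d * rect_diag_mat k c e) $$ (i, j) =
      rect_diag_mat r c (\<lambda>i. if i < k then d i * e i else 0) $$ (i, j)" .
qed simp_all

lemma is_pseudo_inverse_rect_diag_mat:
  fixes d :: "nat \<Rightarrow> real"
  shows "is_pseudo_inverse (rect_diag_mat r c d) (rect_diag_mat c r (\<lambda>i. inverse (d i)))"
proof -
  have "d i * inverse (d i) * d i = d i" "inverse (d i) * d i * inverse (d i) = inverse (d i)" for i
    by (cases "d i = 0"; simp)+
  then show ?thesis
    unfolding is_pseudo_inverse_def
    by (simp, intro conjI rect_diag_mat_cong) simp_all
qed

lemma orthogonal_matD:
  assumes "orthogonal_mat n Q"
  shows "dim_row Q = n" "dim_col Q = n" "transpose_mat Q * Q = 1\<^sub>m n" "Q * transpose_mat Q = 1\<^sub>m n"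
  using assms by (auto simp: orthogonal_mat_def)

lemma transpose_conj:
  fixes U A V :: "'a::comm_semiring_0 mat"
  assumes "dim_col U = dim_row A" and "dim_col A = dim_col V"
  shows "transpose_mat (U * A * transpose_mat V) = V * transpose_mat A * transpose_mat U"
  using assms by (simp add: transpose_mult_dim assoc_mult_mat_dim)

lemma mult_orthogonal_conj:
  fixes U A V B W :: "real mat"
  assumes V: "orthogonal_mat c V"
    and "dim_col U = dim_row A" "dim_col A = c" "dim_row B = c" "dim_col B = dim_col W"
  shows "U * A * transpose_mat V * (V * B * transpose_mat W) = U * (A * B) * transpose_mat W"
proof -
  note dims = assms(2-) orthogonal_matD(1,2)[OF V]
  have "U * A * transpose_mat V * (V * B * transpose_mat W) =
      U * (A * (transpose_mat V * V) * B) * transpose_mat W"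
    using dims by (simp add: assoc_mult_mat_dim)
  then show ?thesis
    using dims by (simp add: orthogonal_matD(3)[OF V])
qed

lemma is_pseudo_inverse_orthogonal_conj:
  fixes A B :: "real mat"
  assumes U: "orthogonal_mat r U" and V: "orthogonal_mat c V"
    and A: "A \<in> carrier_mat r c" and B: "is_pseudo_inverse A B"
  shows "is_pseudo_inverse (U * A * transpose_mat V) (V * B * transpose_mat U)"
proof -
  have ABA: "A * B * A = A" and BAB: "B * A * B = B" and AB: "transpose_mat (A * B) = A * B"
    and BA: "transpose_mat (B * A) = B * A" and B_carrier: "B \<in> carrier_mat c r"
    using A B by (auto simp: is_pseudo_inverse_def)
  note dims = carrier_matD[OF A] carrier_matD[OF B_carrier] orthogonal_matD(1,2)[OF U]
    orthogonal_matD(1,2)[OF V]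
  have UAB: "U * A * transpose_mat V * (V * B * transpose_mat U) = U * (A * B) * transpose_mat U"
    using dims by (intro mult_orthogonal_conj[OF V]) simp_all
  have VBA: "V * B * transpose_mat U * (U * A * transpose_mat V) = V * (B * A) * transpose_mat V"
    using dims by (intro mult_orthogonal_conj[OF U]) simp_all
  have "U * (A * B) * transpose_mat U * (U * A * transpose_mat V) = U * A * transpose_mat V"
    using dims ABA by (subst mult_orthogonal_conj[OF U]) simp_all
  moreover have "V * (B * A) * transpose_mat V * (V * B * transpose_mat U) = V * B * transpose_mat U"
    using dims BAB by (subst mult_orthogonal_conj[OF V]) simp_all
  moreover have "transpose_mat (U * (A * B) * transpose_mat U) = U * (A * B) * transpose_mat U"
    using dims AB by (subst transpose_conj) simp_all
  moreover have "transpose_mat (V * (B * A) * transpose_mat V) = V * (B * A) * transpose_mat V"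
    using dims BA by (subst transpose_conj) simp_all
  ultimately show ?thesis
    unfolding is_pseudo_inverse_def UAB VBA using dims by (auto intro!: carrier_matI)
qed

lemma pinv_orthogonal_conj_rect_diag_mat:
  fixes d :: "nat \<Rightarrow> real"
  assumes "orthogonal_mat r U" and "orthogonal_mat c V"
  shows "pinv (U * rect_diag_mat r c d * transpose_mat V) =
    V * rect_diag_mat c r (\<lambda>i. inverse (d i)) * transpose_mat U"
  using is_pseudo_inverse_orthogonal_conj[OF assms rect_diag_mat_carrier is_pseudo_inverse_rect_diag_mat]
  by (rule pinv_eqI)

lemma gram_orthogonal_conj_rect_diag_mat:
  fixes d :: "nat \<Rightarrow> real"
  assumes U: "orthogonal_mat r U" and V: "orthogonal_mat c V"
    and X: "X = U * rect_diag_mat r c d * transpose_mat V"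
  shows "transpose_mat X * X =
    V * rect_diag_mat c c (\<lambda>i. if i < r then d i * d i else 0) * transpose_mat V"
proof -
  note dims = orthogonal_matD(1,2)[OF U] orthogonal_matD(1,2)[OF V]
  have "transpose_mat X = V * rect_diag_mat c r d * transpose_mat U"
    unfolding X using dims by (subst transpose_conj) simp_all
  then show ?thesis
    unfolding X using dims by (simp add: mult_orthogonal_conj[OF U])
qed

lemma range_projection_orthogonal_conj_rect_diag_mat:
  fixes d :: "nat \<Rightarrow> real"
  assumes U: "orthogonal_mat r U" and V: "orthogonal_mat c V"
    and X: "X = U * rect_diag_mat r c d * transpose_mat V"
  shows "X * pinv (transpose_mat X * X) * transpose_mat X =
    U * rect_diag_mat r r (\<lambda>i. if i < c \<and> d i \<noteq> 0 then 1 else 0) * transpose_mat U"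
proof -
  note dims = orthogonal_matD(1,2)[OF U] orthogonal_matD(1,2)[OF V]
  have Xt: "transpose_mat X = V * rect_diag_mat c r d * transpose_mat U"
    unfolding X using dims by (subst transpose_conj) simp_all
  have "pinv (transpose_mat X * X) =
      V * rect_diag_mat c c (\<lambda>i. inverse (if i < r then d i * d i else 0)) * transpose_mat V"
    by (simp add: gram_orthogonal_conj_rect_diag_mat[OF U V X] pinv_orthogonal_conj_rect_diag_mat[OF V V])
  moreover have "rect_diag_mat r c d * rect_diag_mat c c (\<lambda>i. inverse (if i < r then d i * d i else 0))
      * rect_diag_mat c r d = rect_diag_mat r r (\<lambda>i. if i < c \<and> d i \<noteq> 0 then 1 else 0)"
    by (simp, intro rect_diag_mat_cong) (simp add: field_simps)
  ultimately show ?thesis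
    unfolding Xt unfolding X using dims
    by (simp add: mult_orthogonal_conj[OF V])
qed

lemma is_svdD:
  assumes "is_svd X U V \<sigma>"
  shows "orthogonal_mat (dim_row X) U" "orthogonal_mat (dim_col X) V"
    "X = U * rect_diag_mat (dim_row X) (dim_col X) \<sigma> * transpose_mat V"
  using assms by (simp_all add: is_svd_def rect_diag_mat_def)

lemma gram_n_eq_rect_diag_mat:
  assumes "dim_row V = c"
  shows "gram_n V \<sigma> n =
    V * rect_diag_mat c c (\<lambda>i. if c - n \<le> i then \<sigma> i * \<sigma> i else 0) * transpose_mat V"
proof -
  have "L_mat c \<sigma> n = rect_diag_mat c c (\<lambda>i. if c - n \<le> i then \<sigma> i else 0)"
    by (rule eq_matI) (auto simp: L_mat_def)
  then show ?thesis
    unfolding gram_n_def assms by (simp, intro arg_cong2[where f = "(*)"] refl rect_diag_mat_cong) simp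
qed

lemma filtered_eq_rect_diag_mat:
  assumes "is_svd X U V \<sigma>"
  shows "filtered X V \<sigma> n = U * rect_diag_mat (dim_row X) (dim_col X)
    (\<lambda>i. if dim_col X - n \<le> i then \<sigma> i else 0) * transpose_mat V"
proof -
  define r c where "r = dim_row X" and "c = dim_col X"
  have U: "orthogonal_mat r U" and V: "orthogonal_mat c V"
    and X: "X = U * rect_diag_mat r c \<sigma> * transpose_mat V"
    using is_svdD[OF assms] by (simp_all add: r_def c_def)
  note dims = orthogonal_matD(1,2)[OF U] orthogonal_matD(1,2)[OF V]
  have pinv_XtX: "pinv (transpose_mat X * X) =
      V * rect_diag_mat c c (\<lambda>i. inverse (if i < r then \<sigma> i * \<sigma> i else 0)) * transpose_mat V"
    by (simp add: gram_orthogonal_conj_rect_diag_mat[OF U V X] pinv_orthogonal_conj_rect_diag_mat[OF V V])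
  have "rect_diag_mat r c \<sigma> * rect_diag_mat c c (\<lambda>i. inverse (if i < r then \<sigma> i * \<sigma> i else 0))
      * rect_diag_mat c c (\<lambda>i. if c - n \<le> i then \<sigma> i * \<sigma> i else 0) =
      rect_diag_mat r c (\<lambda>i. if c - n \<le> i then \<sigma> i else 0)"
    by (simp, intro rect_diag_mat_cong) (simp add: field_simps)
  then show ?thesis
    unfolding filtered_def pinv_XtX gram_n_eq_rect_diag_mat[OF dims(3)] unfolding X
    using dims by (simp add: mult_orthogonal_conj[OF V] r_def c_def)
qed

lemma filtered_range_projection_eq:
  assumes svd: "is_svd X U V \<sigma>"
  shows "filtered X V \<sigma> n * pinv (transpose_mat (filtered X V \<sigma> n) * filtered X V \<sigma> n)
      * transpose_mat (filtered X V \<sigma> n) = X * pinv (gram_n V \<sigma> n) * transpose_mat X"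
proof -
  define r c where "r = dim_row X" and "c = dim_col X"
  define kept where "kept = (\<lambda>i. if c - n \<le> i then \<sigma> i else 0)"
  have U: "orthogonal_mat r U" and V: "orthogonal_mat c V"
    and X: "X = U * rect_diag_mat r c \<sigma> * transpose_mat V"
    using is_svdD[OF svd] by (simp_all add: r_def c_def)
  note dims = orthogonal_matD(1,2)[OF U] orthogonal_matD(1,2)[OF V]
  have "filtered X V \<sigma> n = U * rect_diag_mat r c kept * transpose_mat V"
    using filtered_eq_rect_diag_mat[OF svd] by (simp add: r_def c_def kept_def)
  then have "filtered X V \<sigma> n * pinv (transpose_mat (filtered X V \<sigma> n) * filtered X V \<sigma> n)
      * transpose_mat (filtered X V \<sigma> n) =
      U * rect_diag_mat r r (\<lambda>i. if i < c \<and> kept i \<noteq> 0 then 1 else 0) * transpose_mat U"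
    by (rule range_projection_orthogonal_conj_rect_diag_mat[OF U V])
  also have "\<dots> = X * pinv (gram_n V \<sigma> n) * transpose_mat X"
  proof -
    have "rect_diag_mat r c \<sigma> * rect_diag_mat c c (\<lambda>i. inverse (if c - n \<le> i then \<sigma> i * \<sigma> i else 0))
        * rect_diag_mat c r \<sigma> = rect_diag_mat r r (\<lambda>i. if i < c \<and> kept i \<noteq> 0 then 1 else 0)"
      by (simp, intro rect_diag_mat_cong) (simp add: kept_def field_simps)
    moreover have "transpose_mat X = V * rect_diag_mat c r \<sigma> * transpose_mat U"
      unfolding X using dims by (subst transpose_conj) simp_all
    ultimately show ?thesis
      unfolding gram_n_eq_rect_diag_mat[OF dims(3)] pinv_orthogonal_conj_rect_diag_mat[OF V V]
      using dims by (simp add: X mult_orthogonal_conj[OF V])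
  qed
  finally show ?thesis .
qed

theorem mainTheorem4:
  fixes N NS NL :: nat
    and cp cm vp vm :: "nat \<Rightarrow> nat"
    and US VS UL VL :: "real mat"
    and \<sigma>S \<sigma>L :: "nat \<Rightarrow> real"
  defines "Sig \<equiv> star_matrix N NS cp cm"
      and "Lam \<equiv> loop_matrix N NL vp vm"
  assumes cells: "\<forall>m < N. cp m < NS \<and> cm m < NS \<and> cp m \<noteq> cm m"
      and cells3: "\<forall>c < NS. card {m. m < N \<and> (cp m = c \<or> cm m = c)} = 3"
      and verts: "\<forall>m < N. vp m < NL \<and> vm m < NL \<and> vp m \<noteq> vm m"
      and svdS: "is_svd Sig US VS \<sigma>S"
      and svdL: "is_svd Lam UL VL \<sigma>L"
  shows "(\<forall>n. 1 \<le> n \<and> n \<le> NS \<longrightarrow>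
            filtered Sig VS \<sigma>S n * pinv (transpose_mat (filtered Sig VS \<sigma>S n) * filtered Sig VS \<sigma>S n)
              * transpose_mat (filtered Sig VS \<sigma>S n)
          = Sig * pinv (gram_n VS \<sigma>S n) * transpose_mat Sig) \<and>
         (\<forall>n. 1 \<le> n \<and> n \<le> NL \<longrightarrow>
            filtered Lam VL \<sigma>L n * pinv (transpose_mat (filtered Lam VL \<sigma>L n) * filtered Lam VL \<sigma>L n)
              * transpose_mat (filtered Lam VL \<sigma>L n)
          = Lam * pinv (gram_n VL \<sigma>L n) * transpose_mat Lam)"
  using filtered_range_projection_eq[OF svdS] filtered_range_projection_eq[OF svdL] by blast

end
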